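(* In the setting of the Theorem of Sect. 3.4 (solution $\{\tau_{m,n}\}$ of the lattice $q$-UC hierarchy with $I=\{1,2\}$, $J=\{-1,-2\}$, homogeneous with exponents $d_{m,n}$), assume moreover $\tau_{m+2,n}=\tau_{m,n+2}=\tau_{m,n}$ and $d_{m+2,n}=d_{m,n+2}=d_{m,n}$. Put $f=f_{1,1}$, $g=g_{1,2}$. Then, with $T=T_1T_2$, $\overline F=T(F)$, the evolution closes on $(f,g)$: $$\overline f=\frac{c_{1,1}}{f}\cdot\frac{(\alpha g-1)(g-c_{1,2}\beta)}{(g-\alpha)(\beta g-c_{1,2})},\qquad \overline g=\frac{c_{1,2}}{g}\cdot\frac{(q\gamma\overline f-1)(\overline f-c_{1,1}\delta)}{(\overline f-q\gamma)(\delta\overline f-c_{1,1})},$$ where $(\overline\alpha,\overline\beta,\overline\gamma,\overline\delta)=(q\alpha,\beta/q,q\gamma,\delta/q)$ and $\alpha\delta/(\beta\gamma)=1$ (the $q$-analogue of the sixth Painlevé equation).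
   Context: $q\in\mathbb C^*$, $\boldsymbol t=(t_1,t_2,t_{-1},t_{-2})$; $T_k(t_k)=qt_k$ ($k=1,2$), $T_k(t_k)=q^{-1}t_k$ ($k=-1,-2$), $T_k(t_l)=t_l$ ($l\ne k$); $F^{(i_1,\dots,i_r)}=T_{i_1}\cdots T_{i_r}(F)$. The lattice $q$-UC hierarchy: $t_iT_i(\tau_{m,n+1})T_j(\tau_{m+1,n})-t_jT_j(\tau_{m,n+1})T_i(\tau_{m+1,n})=(t_i-t_j)T_iT_j(\tau_{m,n})\tau_{m+1,n+1}$ for all $i,j\in\{1,2,-1,-2\}$, $(m,n)\in\mathbb Z^2$, with $\tau_{m,n}$ nowhere vanishing and $\tau_{m,n}(q\boldsymbol t)=q^{d_{m,n}}\tau_{m,n}(\boldsymbol t)$, $d_{m,n}+d_{m+1,n+1}=d_{m,n+1}+d_{m+1,n}$. Definitions: $w_{m,n}=\tau_{m+1,n}/\tau_{m,n+1}$, $c_{m,n}=q^{d_{m+1,n}-d_{m,n+1}}$, $f_{m,n}=w^{(1)}_{m,n}/w^{(-1)}_{m,n}$, $g_{m,n}=w^{(1,-1)}_{m,n}/w^{(-1,-2)}_{m,n}$, $\alpha=t_1/t_{-2}$, $\beta=t_{-1}/t_2$, $\gamma=t_1/t_{-1}$, $\delta=t_{-2}/t_2$. *)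

theory Defs
  imports Complex_Main
begin

type_synonym pt = "complex \<times> complex \<times> complex \<times> complex"

definition coord :: "int \<Rightarrow> pt \<Rightarrow> complex" where
  "coord k t = (case t of (a, b, c, e) \<Rightarrow>
     (if k = 1 then a else if k = 2 then b else if k = -1 then c else if k = -2 then e else 0))"

text \<open>The point-shift underlying T_k: T_k(F)(t) = F (tsh q k t).\<close>
definition tsh :: "complex \<Rightarrow> int \<Rightarrow> pt \<Rightarrow> pt" where
  "tsh q k t = (case t of (a, b, c, e) \<Rightarrow>
     (if k = 1 then (q * a, b, c, e)
      else if k = 2 then (a, q * b, c, e)
      else if k = -1 then (a, b, c / q, e)
      else if k = -2 then (a, b, c, e / q)
      else (a, b, c, e)))"

definition scale :: "complex \<Rightarrow> pt \<Rightarrow> pt" where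
  "scale q t = (case t of (a, b, c, e) \<Rightarrow> (q * a, q * b, q * c, q * e))"

definition dom4 :: "pt \<Rightarrow> bool" where
  "dom4 t \<longleftrightarrow> (\<forall>k\<in>{1, 2, -1, -2::int}. coord k t \<noteq> 0)"

definition Kset :: "int set" where "Kset = {1, 2, -1, -2}"

definition wq :: "(int \<Rightarrow> int \<Rightarrow> pt \<Rightarrow> complex) \<Rightarrow> int \<Rightarrow> int \<Rightarrow> pt \<Rightarrow> complex" where
  "wq tau m n t = tau (m + 1) n t / tau m (n + 1) t"

definition cq :: "complex \<Rightarrow> (int \<Rightarrow> int \<Rightarrow> int) \<Rightarrow> int \<Rightarrow> int \<Rightarrow> complex" where
  "cq q d m n = q powi (d (m + 1) n - d m (n + 1))"

definition fq :: "complex \<Rightarrow> (int \<Rightarrow> int \<Rightarrow> pt \<Rightarrow> complex) \<Rightarrow> int \<Rightarrow> int \<Rightarrow> pt \<Rightarrow> complex" where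
  "fq q tau m n t = wq tau m n (tsh q 1 t) / wq tau m n (tsh q (-1) t)"

definition gq :: "complex \<Rightarrow> (int \<Rightarrow> int \<Rightarrow> pt \<Rightarrow> complex) \<Rightarrow> int \<Rightarrow> int \<Rightarrow> pt \<Rightarrow> complex" where
  "gq q tau m n t = wq tau m n (tsh q 1 (tsh q (-1) t)) / wq tau m n (tsh q (-1) (tsh q (-2) t))"

definition alph :: "pt \<Rightarrow> complex" where "alph t = coord 1 t / coord (-2) t"
definition bet :: "pt \<Rightarrow> complex" where "bet t = coord (-1) t / coord 2 t"
definition gam :: "pt \<Rightarrow> complex" where "gam t = coord 1 t / coord (-1) t"
definition del :: "pt \<Rightarrow> complex" where "del t = coord (-2) t / coord 2 t"

definition Tp :: "complex \<Rightarrow> pt \<Rightarrow> pt" where "Tp q t = tsh q 1 (tsh q 2 t)"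

end

theory Submission
  imports Defs
begin

(* Two Hirota equations, at (m+1, n) and at (m, n+1), share the product
   tau_{m+1,n+1} * tau_{m,n}; eliminating it gives a bilinear relation between w_{m,n} and
   w_{m,n+1} at shifted points (w_relation).  Under the periodicity, w_{m,n+2} = w_{m,n}, so
   the relation for (m,n) = (1,1) expresses the T_i T_j-quotients of w_{1,1} through w_{1,2},
   and the one for (1,2) does the converse.  Homogeneity turns the total shift by q into the
   constants c_{m,n} (w_scale).  At a point t = (a,b,c,e), four instances of the relation
   give four cross-ratio-type quotients; the products of two of them are exactly
   f_bar * f / c_{1,1} and g_bar * g / c_{1,2}. *)

lemma tsh_tuple [simp]:
  "tsh q 1 (a, b, c, e) = (q * a, b, c, e)"
  "tsh q 2 (a, b, c, e) = (a, q * b, c, e)"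
  "tsh q (-1) (a, b, c, e) = (a, b, c / q, e)"
  "tsh q (-2) (a, b, c, e) = (a, b, c, e / q)"
  by (simp_all add: tsh_def)

lemma coord_tuple [simp]:
  "coord 1 (a, b, c, e) = a" "coord 2 (a, b, c, e) = b"
  "coord (-1) (a, b, c, e) = c" "coord (-2) (a, b, c, e) = e"
  by (simp_all add: coord_def)

lemma scale_tuple [simp]: "scale q (a, b, c, e) = (q * a, q * b, q * c, q * e)"
  by (simp add: scale_def)

lemma Kset_members [simp]: "1 \<in> Kset" "2 \<in> Kset" "-1 \<in> Kset" "-2 \<in> Kset"
  by (simp_all add: Kset_def)

lemma dom4_tuple [simp]: "dom4 (a, b, c, e) \<longleftrightarrow> a \<noteq> 0 \<and> b \<noteq> 0 \<and> c \<noteq> 0 \<and> e \<noteq> 0"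
  by (simp add: dom4_def)

(* Eliminating the common product A * B from two bilinear equations of Hirota type: this is
   the algebraic core of w_relation (sigma, rho stand for tau_{m+1,n+1}, tau_{m,n}). *)
lemma bilinear_pair_quotients:
  fixes ti tj A Aij B Bij \<rho>i \<rho>j \<sigma>i \<sigma>j :: "'a::field"
  assumes nonzero: "\<rho>i \<noteq> 0" "\<rho>j \<noteq> 0" "B \<noteq> 0" "Bij \<noteq> 0"
    and first: "ti * \<sigma>i * \<rho>j - tj * \<sigma>j * \<rho>i = (ti - tj) * Aij * B"
    and second: "ti * \<rho>i * \<sigma>j - tj * \<rho>j * \<sigma>i = (ti - tj) * Bij * A"
  shows "Aij / Bij * (ti * (\<sigma>j / \<rho>j) - tj * (\<sigma>i / \<rho>i))
       = A / B * (ti * (\<sigma>i / \<rho>i) - tj * (\<sigma>j / \<rho>j))"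
proof -
  have "Aij * B * (ti * \<rho>i * \<sigma>j - tj * \<rho>j * \<sigma>i) = A * Bij * (ti * \<sigma>i * \<rho>j - tj * \<sigma>j * \<rho>i)"
    unfolding first second by simp
  then have "\<rho>i * \<rho>j * (Aij * B * (ti * \<rho>i * \<sigma>j - tj * \<rho>j * \<sigma>i))
           = \<rho>i * \<rho>j * (A * Bij * (ti * \<sigma>i * \<rho>j - tj * \<sigma>j * \<rho>i))"
    by simp
  then show ?thesis
    using nonzero by (simp add: field_simps)
qed

(* Solving a relation X (s y - s' x) = Y (s x - s' y) for X / Y, resp. Y / X, written in the
   ratio s / s', resp. s' / s, of the two coordinates; these are the Moebius forms in which
   alpha, beta, gamma, delta enter the evolution. *)
lemma cross_relation_quotient:
  fixes X Y s s' x y :: "'a::field"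
  assumes rel: "X * (s * y - s' * x) = Y * (s * x - s' * y)"
    and nonzero: "Y \<noteq> 0" "s' \<noteq> 0" and den: "s / s' * y - x \<noteq> 0"
  shows "X / Y = (s / s' * x - y) / (s / s' * y - x)"
proof -
  have den': "s * y - s' * x \<noteq> 0"
    using den nonzero by (simp add: field_simps)
  then have "X / Y = (s * x - s' * y) / (s * y - s' * x)"
    using rel nonzero by (simp add: frac_eq_eq mult.commute)
  also have "\<dots> = (s / s' * x - y) / (s / s' * y - x)"
    using nonzero den' by (simp add: field_simps)
  finally show ?thesis .
qed

lemma cross_relation_inverse_quotient:
  fixes X Y s s' x y :: "'a::field"
  assumes rel: "X * (s * y - s' * x) = Y * (s * x - s' * y)"
    and nonzero: "X \<noteq> 0" "s \<noteq> 0" and den: "x - s' / s * y \<noteq> 0"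
  shows "Y / X = (y - s' / s * x) / (x - s' / s * y)"
proof -
  have den': "s * x - s' * y \<noteq> 0"
    using den nonzero by (simp add: field_simps)
  then have "Y / X = (s * y - s' * x) / (s * x - s' * y)"
    using rel nonzero by (simp add: frac_eq_eq mult.commute)
  also have "\<dots> = (y - s' / s * x) / (x - s' / s * y)"
    using nonzero den' by (simp add: field_simps)
  finally show ?thesis .
qed

locale lattice_qUC =
  fixes q :: complex and tau :: "int \<Rightarrow> int \<Rightarrow> pt \<Rightarrow> complex"
  assumes q_nonzero: "q \<noteq> 0"
    and tau_nonzero: "\<And>m n t. dom4 t \<Longrightarrow> tau m n t \<noteq> 0"
    and hirota: "\<And>i j m n t. i \<in> Kset \<Longrightarrow> j \<in> Kset \<Longrightarrow> dom4 t \<Longrightarrow>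
       coord i t * tau m (n + 1) (tsh q i t) * tau (m + 1) n (tsh q j t)
       - coord j t * tau m (n + 1) (tsh q j t) * tau (m + 1) n (tsh q i t)
       = (coord i t - coord j t) * tau m n (tsh q i (tsh q j t)) * tau (m + 1) (n + 1) t"
begin

lemma dom4_tsh: "dom4 p \<Longrightarrow> k \<in> Kset \<Longrightarrow> dom4 (tsh q k p)"
  using q_nonzero by (cases p) (auto simp: Kset_def)

lemma w_nonzero: "dom4 p \<Longrightarrow> wq tau m n p \<noteq> 0"
  by (simp add: wq_def tau_nonzero)

end

locale periodic_lattice_qUC = lattice_qUC +
  assumes tau_period1: "\<And>m n t. dom4 t \<Longrightarrow> tau (m + 2) n t = tau m n t"
    and tau_period2: "\<And>m n t. dom4 t \<Longrightarrow> tau m (n + 2) t = tau m n t"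
begin

lemma w_period: "dom4 p \<Longrightarrow> wq tau m (n + 2) p = wq tau m n p"
  using tau_period2[of p m "n + 1"] tau_period2[of p "m + 1" n]
  by (simp add: wq_def add.assoc)

lemma w_succ: "dom4 p \<Longrightarrow> wq tau m (n + 1) p = tau (m + 1) (n + 1) p / tau m n p"
  using tau_period2[of p m n] by (simp add: wq_def add.assoc)

(* The bilinear relation between w_{m,n} and w_{m,n+1}: the Hirota equations at (m+1,n) and
   (m,n+1), with tau_{m+2,*} and tau_{*,n+2} reduced by periodicity. *)
lemma w_relation:
  assumes p: "dom4 p" and i: "i \<in> Kset" and j: "j \<in> Kset"
  shows "wq tau m n (tsh q i (tsh q j p)) *
           (coord i p * wq tau m (n + 1) (tsh q j p) - coord j p * wq tau m (n + 1) (tsh q i p))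
       = wq tau m n p *
           (coord i p * wq tau m (n + 1) (tsh q i p) - coord j p * wq tau m (n + 1) (tsh q j p))"
proof -
  have pi: "dom4 (tsh q i p)" and pj: "dom4 (tsh q j p)" and pij: "dom4 (tsh q i (tsh q j p))"
    using dom4_tsh p i j by blast+
  have first: "coord i p * tau (m + 1) (n + 1) (tsh q i p) * tau m n (tsh q j p)
      - coord j p * tau (m + 1) (n + 1) (tsh q j p) * tau m n (tsh q i p)
      = (coord i p - coord j p) * tau (m + 1) n (tsh q i (tsh q j p)) * tau m (n + 1) p"
    using hirota[OF i j p, of "m + 1" n] tau_period1[OF p, of m "n + 1"]
      tau_period1[OF pi, of m n] tau_period1[OF pj, of m n]
    by (simp add: add.assoc)
  have second: "coord i p * tau m n (tsh q i p) * tau (m + 1) (n + 1) (tsh q j p)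
      - coord j p * tau m n (tsh q j p) * tau (m + 1) (n + 1) (tsh q i p)
      = (coord i p - coord j p) * tau m (n + 1) (tsh q i (tsh q j p)) * tau (m + 1) n p"
    using hirota[OF i j p, of m "n + 1"] tau_period2[OF p, of "m + 1" n]
      tau_period2[OF pi, of m n] tau_period2[OF pj, of m n]
    by (simp add: add.assoc)
  show ?thesis
    using bilinear_pair_quotients[OF tau_nonzero[OF pi] tau_nonzero[OF pj]
        tau_nonzero[OF p] tau_nonzero[OF pij] first second]
    unfolding w_succ[OF pi] w_succ[OF pj] by (simp add: wq_def)
qed

lemma w_relation_normalized:
  assumes p: "dom4 p" and i: "i \<in> Kset" and j: "j \<in> Kset" and r: "r \<noteq> 0"
    and wi: "wq tau m (n + 1) (tsh q i p) = x * r"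
    and wj: "wq tau m (n + 1) (tsh q j p) = y * r"
  shows "wq tau m n (tsh q i (tsh q j p)) * (coord i p * y - coord j p * x)
       = wq tau m n p * (coord i p * x - coord j p * y)"
proof -
  have "r * (wq tau m n (tsh q i (tsh q j p)) * (coord i p * y - coord j p * x))
      = r * (wq tau m n p * (coord i p * x - coord j p * y))"
    using w_relation[OF p i j, of m n] unfolding wi wj by (simp add: algebra_simps)
  then show ?thesis
    using r by simp
qed

end

locale homogeneous_lattice_qUC = lattice_qUC +
  fixes d :: "int \<Rightarrow> int \<Rightarrow> int"
  assumes tau_homog: "\<And>m n t. dom4 t \<Longrightarrow> tau m n (scale q t) = q powi (d m n) * tau m n t"
begin

lemma c_nonzero: "cq q d m n \<noteq> 0"
  using q_nonzero by (simp add: cq_def)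

lemma w_scale: "dom4 p \<Longrightarrow> wq tau m n (scale q p) = cq q d m n * wq tau m n p"
  using q_nonzero tau_nonzero[of p] by (simp add: wq_def cq_def tau_homog power_int_diff)

end

locale qP6_reduction = periodic_lattice_qUC + homogeneous_lattice_qUC
begin

(* Computations at a point t = (a, b, c, e) with nonzero coordinates;
   there Tp q t = (q a, q b, c, e). *)
context
  fixes a b c e :: complex
  assumes coords_nonzero: "a \<noteq> 0" "b \<noteq> 0" "c \<noteq> 0" "e \<noteq> 0"
begin

(* T_1 T_2 = scaling by q composed with T_{-1} T_{-2}, applied to w_{1,2} and to f. *)
lemma w12_scaled: "wq tau 1 2 (q * a, q * b, c, e) = cq q d 1 2 * wq tau 1 2 (a, b, c / q, e / q)"
  using w_scale[of "(a, b, c / q, e / q)" 1 2] coords_nonzero q_nonzero by simp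

lemma f_shifted: "fq q tau 1 1 (Tp q (a, b, c, e))
    = cq q d 1 1 * wq tau 1 1 (q * a, b, c / q, e / q) / wq tau 1 1 (q * a, q * b, c / q, e)"
  using w_scale[of "(q * a, b, c / q, e / q)" 1 1] coords_nonzero q_nonzero
  by (simp add: fq_def Tp_def)

(* The relation for (i,j) = (1,-2) and (2,-1), with (m,n) = (1,1): quotients of w_{1,1}
   in terms of g = g_{1,2}(t); their product is f_bar * f / c_{1,1}. *)
lemma w11_quotient_1m2:
  assumes "gq q tau 1 2 (a, b, c, e) \<noteq> a / e"
  shows "wq tau 1 1 (q * a, b, c / q, e / q) / wq tau 1 1 (a, b, c / q, e)
       = (a / e * gq q tau 1 2 (a, b, c, e) - 1) / (a / e - gq q tau 1 2 (a, b, c, e))"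
proof -
  define g where "g = gq q tau 1 2 (a, b, c, e)"
  define V0 where "V0 = wq tau 1 2 (a, b, c / q, e / q)"
  have V0_nz: "V0 \<noteq> 0" using coords_nonzero q_nonzero w_nonzero by (simp add: V0_def)
  have "wq tau 1 2 (q * a, b, c / q, e) = g * V0"
    using V0_nz by (simp add: g_def gq_def V0_def)
  then have "wq tau 1 1 (q * a, b, c / q, e / q) * (a * 1 - e * g) = wq tau 1 1 (a, b, c / q, e) * (a * g - e * 1)"
    using w_relation_normalized[of "(a, b, c / q, e)" 1 "-2" V0 1 1 g 1] coords_nonzero q_nonzero V0_nz
    by (simp add: V0_def)
  from cross_relation_quotient[OF this _ coords_nonzero(4)] show ?thesis
    using assms coords_nonzero q_nonzero w_nonzero by (simp add: g_def)
qed

lemma w11_quotient_2m1: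
  assumes "c / b * gq q tau 1 2 (a, b, c, e) \<noteq> cq q d 1 2"
  shows "wq tau 1 1 (q * a, b, c, e) / wq tau 1 1 (q * a, q * b, c / q, e)
       = (gq q tau 1 2 (a, b, c, e) - c / b * cq q d 1 2) / (cq q d 1 2 - c / b * gq q tau 1 2 (a, b, c, e))"
proof -
  define g where "g = gq q tau 1 2 (a, b, c, e)"
  define V0 where "V0 = wq tau 1 2 (a, b, c / q, e / q)"
  have V0_nz: "V0 \<noteq> 0" using coords_nonzero q_nonzero w_nonzero by (simp add: V0_def)
  have "wq tau 1 2 (q * a, b, c / q, e) = g * V0"
    using V0_nz by (simp add: g_def gq_def V0_def)
  then have "wq tau 1 1 (q * a, q * b, c / q, e) * (b * g - c * cq q d 1 2)
      = wq tau 1 1 (q * a, b, c, e) * (b * cq q d 1 2 - c * g)"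
    using w_relation_normalized[of "(q * a, b, c, e)" 2 "-1" V0 1 1 "cq q d 1 2" g]
      coords_nonzero q_nonzero V0_nz w12_scaled
    by (simp add: V0_def)
  from cross_relation_inverse_quotient[OF this _ coords_nonzero(2)] show ?thesis
    using assms coords_nonzero q_nonzero w_nonzero by (simp add: g_def)
qed

(* The relation for (i,j) = (1,-1) and (2,-2), with (m,n) = (1,2), at the shifted point:
   quotients of w_{1,2} in terms of f_bar = f_{1,1}(T t); their product is
   g_bar * g / c_{1,2}. *)
lemma w12_quotient_1m1:
  assumes "fq q tau 1 1 (Tp q (a, b, c, e)) \<noteq> q * a / c"
  shows "wq tau 1 2 (q * (q * a), q * b, c / q, e) / (cq q d 1 2 * wq tau 1 2 (a, b, c / q, e / q))
       = (q * a / c * fq q tau 1 1 (Tp q (a, b, c, e)) - 1) / (q * a / c - fq q tau 1 1 (Tp q (a, b, c, e)))"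
proof -
  define F where "F = fq q tau 1 1 (Tp q (a, b, c, e))"
  define W0 where "W0 = wq tau 1 1 (q * a, q * b, c / q, e)"
  have W0_nz: "W0 \<noteq> 0" using coords_nonzero q_nonzero w_nonzero by (simp add: W0_def)
  have "wq tau 1 1 (q * (q * a), q * b, c, e) = F * W0"
    using f_shifted w_scale[of "(q * a, b, c / q, e / q)" 1 1] coords_nonzero q_nonzero W0_nz
    by (simp add: F_def W0_def)
  then have "wq tau 1 2 (q * (q * a), q * b, c / q, e) * (q * a * 1 - c * F)
      = (cq q d 1 2 * wq tau 1 2 (a, b, c / q, e / q)) * (q * a * F - c * 1)"
    using w_relation_normalized[of "(q * a, q * b, c, e)" 1 "-1" W0 1 2 F 1]
      w_period[of "(q * (q * a), q * b, c, e)" 1 1] w_period[of "(q * a, q * b, c / q, e)" 1 1]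
      coords_nonzero q_nonzero W0_nz w12_scaled
    by (simp add: W0_def)
  from cross_relation_quotient[OF this _ coords_nonzero(3)] show ?thesis
    using assms coords_nonzero q_nonzero w_nonzero c_nonzero by (simp add: F_def)
qed

lemma w12_quotient_2m2:
  assumes "e / b * fq q tau 1 1 (Tp q (a, b, c, e)) \<noteq> cq q d 1 1"
  shows "wq tau 1 2 (q * a, b, c / q, e) / wq tau 1 2 (q * a, q * b, c / q, e / q)
       = (fq q tau 1 1 (Tp q (a, b, c, e)) - e / b * cq q d 1 1)
         / (cq q d 1 1 - e / b * fq q tau 1 1 (Tp q (a, b, c, e)))"
proof -
  define F where "F = fq q tau 1 1 (Tp q (a, b, c, e))"
  define r where "r = wq tau 1 1 (q * a, q * b, c / q, e) / cq q d 1 1"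
  have r_nz: "r \<noteq> 0" using coords_nonzero q_nonzero w_nonzero c_nonzero by (simp add: r_def)
  have "wq tau 1 1 (q * a, b, c / q, e / q) = F * r"
    using f_shifted coords_nonzero q_nonzero w_nonzero c_nonzero by (simp add: F_def r_def)
  then have "wq tau 1 2 (q * a, q * b, c / q, e / q) * (b * F - e * cq q d 1 1)
      = wq tau 1 2 (q * a, b, c / q, e) * (b * cq q d 1 1 - e * F)"
    using w_relation_normalized[of "(q * a, b, c / q, e)" 2 "-2" r 1 2 "cq q d 1 1" F]
      w_period[of "(q * a, b, c / q, e / q)" 1 1] w_period[of "(q * a, q * b, c / q, e)" 1 1]
      coords_nonzero q_nonzero r_nz c_nonzero
    by (simp add: r_def)
  from cross_relation_inverse_quotient[OF this _ coords_nonzero(2)] show ?thesis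
    using assms coords_nonzero q_nonzero w_nonzero by (simp add: F_def)
qed

end

lemma f_evolution:
  assumes t: "dom4 t"
    and g_alpha: "gq q tau 1 2 t - alph t \<noteq> 0"
    and g_beta: "bet t * gq q tau 1 2 t - cq q d 1 2 \<noteq> 0"
  shows "fq q tau 1 1 (Tp q t) =
           cq q d 1 1 / fq q tau 1 1 t *
           ((alph t * gq q tau 1 2 t - 1) * (gq q tau 1 2 t - cq q d 1 2 * bet t)
            / ((gq q tau 1 2 t - alph t) * (bet t * gq q tau 1 2 t - cq q d 1 2)))"
proof -
  obtain a b c e where t_eq: "t = (a, b, c, e)" by (cases t)
  have nz: "a \<noteq> 0" "b \<noteq> 0" "c \<noteq> 0" "e \<noteq> 0" "q \<noteq> 0" using t q_nonzero by (simp_all add: t_eq)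
  define g where "g = gq q tau 1 2 t"
  define c12 where "c12 = cq q d 1 2"
  have ab: "alph t = a / e" "bet t = c / b" by (simp_all add: t_eq alph_def bet_def)
  have f: "fq q tau 1 1 t = wq tau 1 1 (q * a, b, c, e) / wq tau 1 1 (a, b, c / q, e)"
    by (simp add: fq_def t_eq)
  have rational_part: "(a / e * g - 1) * (g - c12 * (c / b)) / ((g - a / e) * (c / b * g - c12))
      = wq tau 1 1 (q * a, b, c / q, e / q) / wq tau 1 1 (a, b, c / q, e)
      * (wq tau 1 1 (q * a, b, c, e) / wq tau 1 1 (q * a, q * b, c / q, e))"
    (is "_ = ?quotients")
  proof -
    have "(g - a / e) * (c / b * g - c12) = (a / e - g) * (c12 - c / b * g)"
      by algebra
    then have "(a / e * g - 1) * (g - c12 * (c / b)) / ((g - a / e) * (c / b * g - c12))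
        = (a / e * g - 1) / (a / e - g) * ((g - c / b * c12) / (c12 - c / b * g))"
      by (simp add: times_divide_times_eq mult.commute)
    also have "\<dots> = ?quotients"
    proof -
      have "g \<noteq> a / e" "c / b * g \<noteq> c12"
        using g_alpha g_beta by (simp_all add: ab g_def c12_def mult.commute)
      then show ?thesis
        using w11_quotient_1m2[OF nz(1-4)] w11_quotient_2m1[OF nz(1-4)]
        by (simp add: g_def c12_def t_eq)
    qed
    finally show ?thesis .
  qed
  show ?thesis
    unfolding t_eq f_shifted[OF nz(1-4)]
    unfolding t_eq[symmetric] f ab g_def[symmetric] c12_def[symmetric] rational_part
    using nz w_nonzero by (simp add: field_simps)
qed

lemma g_evolution:
  assumes t: "dom4 t"
    and f_gamma: "fq q tau 1 1 (Tp q t) - q * gam t \<noteq> 0"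
    and f_delta: "del t * fq q tau 1 1 (Tp q t) - cq q d 1 1 \<noteq> 0"
  shows "gq q tau 1 2 (Tp q t) =
           cq q d 1 2 / gq q tau 1 2 t *
           ((q * gam t * fq q tau 1 1 (Tp q t) - 1) * (fq q tau 1 1 (Tp q t) - cq q d 1 1 * del t)
            / ((fq q tau 1 1 (Tp q t) - q * gam t) * (del t * fq q tau 1 1 (Tp q t) - cq q d 1 1)))"
proof -
  obtain a b c e where t_eq: "t = (a, b, c, e)" by (cases t)
  have nz: "a \<noteq> 0" "b \<noteq> 0" "c \<noteq> 0" "e \<noteq> 0" "q \<noteq> 0" using t q_nonzero by (simp_all add: t_eq)
  define F where "F = fq q tau 1 1 (Tp q t)"
  define c11 where "c11 = cq q d 1 1"
  define c12 where "c12 = cq q d 1 2"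
  have gd: "gam t = a / c" "del t = e / b" by (simp_all add: t_eq gam_def del_def)
  have g: "gq q tau 1 2 t = wq tau 1 2 (q * a, b, c / q, e) / wq tau 1 2 (a, b, c / q, e / q)"
    by (simp add: gq_def t_eq)
  have g_shifted: "gq q tau 1 2 (Tp q t)
      = wq tau 1 2 (q * (q * a), q * b, c / q, e) / wq tau 1 2 (q * a, q * b, c / q, e / q)"
    by (simp add: gq_def Tp_def t_eq)
  have rational_part: "(q * (a / c) * F - 1) * (F - c11 * (e / b)) / ((F - q * (a / c)) * (e / b * F - c11))
      = wq tau 1 2 (q * (q * a), q * b, c / q, e) / (c12 * wq tau 1 2 (a, b, c / q, e / q))
      * (wq tau 1 2 (q * a, b, c / q, e) / wq tau 1 2 (q * a, q * b, c / q, e / q))"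
    (is "_ = ?quotients")
  proof -
    have "(F - q * (a / c)) * (e / b * F - c11) = (q * a / c - F) * (c11 - e / b * F)"
      by algebra
    then have "(q * (a / c) * F - 1) * (F - c11 * (e / b)) / ((F - q * (a / c)) * (e / b * F - c11))
        = (q * a / c * F - 1) / (q * a / c - F) * ((F - e / b * c11) / (c11 - e / b * F))"
      by (simp add: times_divide_times_eq mult.commute)
    also have "\<dots> = ?quotients"
    proof -
      have "F \<noteq> q * a / c" "e / b * F \<noteq> c11"
        using f_gamma f_delta by (simp_all add: gd F_def c11_def)
      then show ?thesis
        using w12_quotient_1m1[OF nz(1-4)] w12_quotient_2m2[OF nz(1-4)]
        by (simp add: F_def c11_def c12_def t_eq)
    qed
    finally show ?thesis .
  qed
  show ?thesis
    unfolding g_shifted g gd F_def[symmetric] c11_def[symmetric] c12_def[symmetric] rational_part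
    using nz w_nonzero c_nonzero by (simp add: c12_def field_simps)
qed

end

lemma parameter_shift:
  "alph (Tp q t) = q * alph t \<and> bet (Tp q t) = bet t / q \<and>
   gam (Tp q t) = q * gam t \<and> del (Tp q t) = del t / q"
  by (cases t) (simp add: Tp_def alph_def bet_def gam_def del_def)

lemma parameter_constraint: "dom4 t \<Longrightarrow> alph t * del t / (bet t * gam t) = 1"
  by (cases t) (simp add: alph_def bet_def gam_def del_def)

theorem mainTheorem6:
  fixes q :: complex and tau :: "int \<Rightarrow> int \<Rightarrow> pt \<Rightarrow> complex" and d :: "int \<Rightarrow> int \<Rightarrow> int"
  assumes q0: "q \<noteq> 0"
    and nonvanish: "\<And>m n t. dom4 t \<Longrightarrow> tau m n t \<noteq> 0"
    and hirota: "\<And>i j m n t. i \<in> Kset \<Longrightarrow> j \<in> Kset \<Longrightarrow> dom4 t \<Longrightarrow>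
       coord i t * tau m (n + 1) (tsh q i t) * tau (m + 1) n (tsh q j t)
       - coord j t * tau m (n + 1) (tsh q j t) * tau (m + 1) n (tsh q i t)
       = (coord i t - coord j t) * tau m n (tsh q i (tsh q j t)) * tau (m + 1) (n + 1) t"
    and homog: "\<And>m n t. dom4 t \<Longrightarrow> tau m n (scale q t) = q powi (d m n) * tau m n t"
    and dcond: "\<And>m n. d m n + d (m + 1) (n + 1) = d m (n + 1) + d (m + 1) n"
    and per1: "\<And>m n t. dom4 t \<Longrightarrow> tau (m + 2) n t = tau m n t"
    and per2: "\<And>m n t. dom4 t \<Longrightarrow> tau m (n + 2) t = tau m n t"
    and dper1: "\<And>m n. d (m + 2) n = d m n"
    and dper2: "\<And>m n. d m (n + 2) = d m n"
    and t: "dom4 t"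
  shows "alph (Tp q t) = q * alph t \<and> bet (Tp q t) = bet t / q \<and>
         gam (Tp q t) = q * gam t \<and> del (Tp q t) = del t / q \<and>
         alph t * del t / (bet t * gam t) = 1 \<and>
         ((gq q tau 1 2 t - alph t \<noteq> 0 \<and> bet t * gq q tau 1 2 t - cq q d 1 2 \<noteq> 0) \<longrightarrow>
            fq q tau 1 1 (Tp q t) =
              cq q d 1 1 / fq q tau 1 1 t *
              ((alph t * gq q tau 1 2 t - 1) * (gq q tau 1 2 t - cq q d 1 2 * bet t)
               / ((gq q tau 1 2 t - alph t) * (bet t * gq q tau 1 2 t - cq q d 1 2)))) \<and>
         ((fq q tau 1 1 (Tp q t) - q * gam t \<noteq> 0 \<and> del t * fq q tau 1 1 (Tp q t) - cq q d 1 1 \<noteq> 0) \<longrightarrow>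
            gq q tau 1 2 (Tp q t) =
              cq q d 1 2 / gq q tau 1 2 t *
              ((q * gam t * fq q tau 1 1 (Tp q t) - 1) * (fq q tau 1 1 (Tp q t) - cq q d 1 1 * del t)
               / ((fq q tau 1 1 (Tp q t) - q * gam t) * (del t * fq q tau 1 1 (Tp q t) - cq q d 1 1))))"
proof -
  interpret qP6_reduction q tau d
    by unfold_locales (fact q0 nonvanish hirota per1 per2 homog)+
  show ?thesis
    using parameter_shift[of q t] parameter_constraint[OF t] f_evolution[OF t] g_evolution[OF t]
    by blast
qed

end
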